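(* Let $(\mathbb S,+,\cdot)$ be an S-Field and let $\alpha,\beta\in\mathbb S_0$ with $\alpha\neq0$, $\beta\neq0$ and $\alpha+\beta\neq 0$. Then $\frac{\alpha}{0}+\frac{\beta}{0}=\frac{\alpha+\beta}{0}$.
   Context: An S-Structure is a triple $(\mathbb S,+,\cdot)$ where $\mathbb S$ is a set and $+,\cdot$ are binary operations on $\mathbb S$ such that: $(\mathbb S,+)$ is a commutative group with identity $0$ (the inverse of $s$ is written $-s$, and $s-t:=s+(-t)$); $\mathbb S$ is closed under $\cdot$; and there exists $s\in\mathbb S$ with $0\cdot s\neq 0$ or $s\cdot 0\neq 0$. Multiplication binds tighter than addition. The structures considered come with a distinguished element of $\mathbb S$ denoted $1$. It is Commutative if $s\cdot t=t\cdot s$ for all $s,t$. For a Commutative S-Structure and $\alpha\in\mathbb S$, put $\mathbb S_\alpha=\{s\in\mathbb S:0\cdot s=s\cdot 0=\alpha\}$ and $\Lambda=\{\alpha\in\mathbb S:\mathbb S_\alpha\neq\emptyset\}$. Wheel Distributive: $s\cdot(t+r)+(s\cdot 0)=(s\cdot t)+(s\cdot r)$ for all $s,t,r\in\mathbb S$. S-Associative: for all $m,n\in\mathbb S_0$ and $s\in\mathbb S$, $m\cdot(n\cdot s)=(m\cdot n)\cdot s-([(m-1)\cdot(n-1)]\cdot(0\cdot s))$. Base: if $\mathbb S_0\neq\emptyset$ and $\alpha\in\Lambda$, $q\in\mathbb S_\alpha$ is a Base for $\mathbb S_\alpha$ if $q+\beta\in\mathbb S_\alpha$ for all $\beta\in\mathbb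 S_0$ and every $s\in\mathbb S_\alpha$ equals $q+\beta$ for some $\beta\in\mathbb S_0$. Coordinated: $\mathbb S_0\neq\emptyset$ and every $\mathbb S_\alpha$ with $\alpha\in\Lambda$ has a Base. Standard Bases: a Coordinated Commutative S-Structure has Standard Bases if there is a specified element $q_0(1)\in\mathbb S_1$ which is a Base for $\mathbb S_1$, and for every $\alpha\in\Lambda$ the element $q_0(\alpha):=\alpha\cdot(q_0(1)+1)-1$ lies in $\mathbb S_\alpha$ and is a Base for $\mathbb S_\alpha$. An Essential S-Structure is an S-Structure that is Commutative, Wheel Distributive, S-Associative, has Standard Bases (in particular is Coordinated), satisfies $0,1\in\mathbb S_0$, and satisfies $\mathbb S_0=\{1\cdot x:x\in\mathbb S_0\}$. A Unity is an element $e\in\Lambda$ with $e\cdot s=s\cdot e=s$ for all $s\in\mathbb S$. Scalar Inverses: the structure has a Unity $e$ and for every $x\in\mathbb S_0$ with $x\neq 0$ there is $x^{-1}\in\mathbb S_0$ with $x\cdot x^{-1}=x^{-1}\cdot x=e$. An S-Ring is an Essential S-Structure with a Unity; an S-Field is an S-Ring with Scalar Inverses. Reversible: for $\alpha\in\Lambda$, $q_0(\alpha)$ is Reversible if there exists $\alpha^*\in\Lambda$ with $q_0(1)=\alpha^*\cdot(q_0(\alpha)+\alpha)-\alpha$; then $q_0^*(\alpha):=q_0(\alpha)$. Division By Zero: in an S-Field, for $\alpha\in\mathbb S_0$ with $\alpha\neq0$, $\frac{\alpha}{0}:=q_0^*(\alpha)$. *)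

theory Defs
  imports Main
begin

record 'a sstruct =
  scar  :: "'a set"
  sadd  :: "'a \<Rightarrow> 'a \<Rightarrow> 'a"
  sneg  :: "'a \<Rightarrow> 'a"
  szero :: 'a
  smul  :: "'a \<Rightarrow> 'a \<Rightarrow> 'a"
  sone  :: 'a
  sq1   :: 'a

definition ssub :: "'a sstruct \<Rightarrow> 'a \<Rightarrow> 'a \<Rightarrow> 'a" where
  "ssub R s t = sadd R s (sneg R t)"

definition s_structure :: "'a sstruct \<Rightarrow> bool" where
  "s_structure R \<longleftrightarrow>
     (\<forall>s\<in>scar R. \<forall>t\<in>scar R. sadd R s t \<in> scar R) \<and>
     (\<forall>s\<in>scar R. \<forall>t\<in>scar R. \<forall>r\<in>scar R. sadd R (sadd R s t) r = sadd R s (sadd R t r)) \<and>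
     (\<forall>s\<in>scar R. \<forall>t\<in>scar R. sadd R s t = sadd R t s) \<and>
     szero R \<in> scar R \<and>
     (\<forall>s\<in>scar R. sadd R s (szero R) = s) \<and>
     (\<forall>s\<in>scar R. sneg R s \<in> scar R \<and> sadd R s (sneg R s) = szero R) \<and>
     (\<forall>s\<in>scar R. \<forall>t\<in>scar R. smul R s t \<in> scar R) \<and>
     (\<exists>s\<in>scar R. smul R (szero R) s \<noteq> szero R \<or> smul R s (szero R) \<noteq> szero R) \<and>
     sone R \<in> scar R"

definition s_commutative :: "'a sstruct \<Rightarrow> bool" where
  "s_commutative R \<longleftrightarrow> (\<forall>s\<in>scar R. \<forall>t\<in>scar R. smul R s t = smul R t s)"

definition S_alpha :: "'a sstruct \<Rightarrow> 'a \<Rightarrow> 'a set" where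
  "S_alpha R a = {s \<in> scar R. smul R (szero R) s = a \<and> smul R s (szero R) = a}"

definition Lambda :: "'a sstruct \<Rightarrow> 'a set" where
  "Lambda R = {a \<in> scar R. S_alpha R a \<noteq> {}}"

definition wheel_distributive :: "'a sstruct \<Rightarrow> bool" where
  "wheel_distributive R \<longleftrightarrow>
     (\<forall>s\<in>scar R. \<forall>t\<in>scar R. \<forall>r\<in>scar R.
        sadd R (smul R s (sadd R t r)) (smul R s (szero R)) = sadd R (smul R s t) (smul R s r))"

definition s_associative :: "'a sstruct \<Rightarrow> bool" where
  "s_associative R \<longleftrightarrow>
     (\<forall>m\<in>S_alpha R (szero R). \<forall>n\<in>S_alpha R (szero R). \<forall>s\<in>scar R.
        smul R m (smul R n s) =
        ssub R (smul R (smul R m n) s)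
               (smul R (smul R (ssub R m (sone R)) (ssub R n (sone R))) (smul R (szero R) s)))"

definition is_base :: "'a sstruct \<Rightarrow> 'a \<Rightarrow> 'a \<Rightarrow> bool" where
  "is_base R a q \<longleftrightarrow>
     q \<in> S_alpha R a \<and>
     (\<forall>b\<in>S_alpha R (szero R). sadd R q b \<in> S_alpha R a) \<and>
     (\<forall>s\<in>S_alpha R a. \<exists>b\<in>S_alpha R (szero R). s = sadd R q b)"

definition coordinated :: "'a sstruct \<Rightarrow> bool" where
  "coordinated R \<longleftrightarrow> S_alpha R (szero R) \<noteq> {} \<and> (\<forall>a\<in>Lambda R. \<exists>q. is_base R a q)"

definition q0 :: "'a sstruct \<Rightarrow> 'a \<Rightarrow> 'a" where
  "q0 R a = (if a = sone R then sq1 R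
             else ssub R (smul R a (sadd R (sq1 R) (sone R))) (sone R))"

definition standard_bases :: "'a sstruct \<Rightarrow> bool" where
  "standard_bases R \<longleftrightarrow> coordinated R \<and> is_base R (sone R) (sq1 R) \<and>
     (\<forall>a\<in>Lambda R. q0 R a \<in> S_alpha R a \<and> is_base R a (q0 R a))"

definition essential :: "'a sstruct \<Rightarrow> bool" where
  "essential R \<longleftrightarrow> s_structure R \<and> s_commutative R \<and> wheel_distributive R \<and>
     s_associative R \<and> standard_bases R \<and>
     szero R \<in> S_alpha R (szero R) \<and> sone R \<in> S_alpha R (szero R) \<and>
     S_alpha R (szero R) = {smul R (sone R) x | x. x \<in> S_alpha R (szero R)}"

definition unity :: "'a sstruct \<Rightarrow> 'a \<Rightarrow> bool" where
  "unity R e \<longleftrightarrow> e \<in> Lambda R \<and> (\<forall>s\<in>scar R. smul R e s = s \<and> smul R s e = s)"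

definition s_ring :: "'a sstruct \<Rightarrow> bool" where
  "s_ring R \<longleftrightarrow> essential R \<and> (\<exists>e. unity R e)"

definition s_field :: "'a sstruct \<Rightarrow> bool" where
  "s_field R \<longleftrightarrow> s_ring R \<and>
     (\<exists>e. unity R e \<and>
        (\<forall>x\<in>S_alpha R (szero R). x \<noteq> szero R \<longrightarrow>
           (\<exists>y\<in>S_alpha R (szero R). smul R x y = e \<and> smul R y x = e)))"

definition reversible :: "'a sstruct \<Rightarrow> 'a \<Rightarrow> bool" where
  "reversible R a \<longleftrightarrow> (\<exists>a'\<in>Lambda R.
     sq1 R = ssub R (smul R a' (sadd R (q0 R a) a)) a)"

definition div_zero :: "'a sstruct \<Rightarrow> 'a \<Rightarrow> 'a" where
  "div_zero R a = q0 R a"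

end

theory Submission
  imports Defs
begin

text \<open>In an S-Field the distinguished element 1 is the unity: either 1 = 0, and then
  S_0 = 1 S_0 collapses to {0}, which contains the unity; or 1 has an inverse v, and
  S-associativity gives 1 (1 v) = (1 1) v, where 1 1 = 1 follows from the instance
  m = e of S-associativity. Hence q0(1) is given by the same formula
  q0(x) = x (q0(1) + 1) - 1 as every other q0(x). Since 0 (q0(1) + 1) = 1, wheel
  distributivity reads x (q0(1) + 1) + y (q0(1) + 1) = (x + y)(q0(1) + 1) + 1, and the
  two constant terms -1 absorb the extra 1: the map x \<mapsto> x/0 is additive.\<close>

locale sstructure =
  fixes R :: "'a sstruct" (structure)
  assumes s_structure: "s_structure R"
begin

abbreviation add (infixl "\<oplus>" 65) where "x \<oplus> y \<equiv> sadd R x y"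
abbreviation sub (infixl "\<ominus>" 65) where "x \<ominus> y \<equiv> ssub R x y"
abbreviation mul (infixl "\<otimes>" 70) where "x \<otimes> y \<equiv> smul R x y"
abbreviation zero ("\<zero>") where "\<zero> \<equiv> szero R"
abbreviation one ("\<one>") where "\<one> \<equiv> sone R"
abbreviation neg where "neg \<equiv> sneg R"
abbreviation S0 where "S0 \<equiv> S_alpha R \<zero>"

lemma add_closed: "x \<in> scar R \<Longrightarrow> y \<in> scar R \<Longrightarrow> x \<oplus> y \<in> scar R"
  and add_assoc: "x \<in> scar R \<Longrightarrow> y \<in> scar R \<Longrightarrow> z \<in> scar R \<Longrightarrow> x \<oplus> y \<oplus> z = x \<oplus> (y \<oplus> z)"
  and add_comm: "x \<in> scar R \<Longrightarrow> y \<in> scar R \<Longrightarrow> x \<oplus> y = y \<oplus> x"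
  and zero_closed: "\<zero> \<in> scar R"
  and add_zero: "x \<in> scar R \<Longrightarrow> x \<oplus> \<zero> = x"
  and neg_closed: "x \<in> scar R \<Longrightarrow> neg x \<in> scar R"
  and add_neg: "x \<in> scar R \<Longrightarrow> x \<oplus> neg x = \<zero>"
  and mul_closed: "x \<in> scar R \<Longrightarrow> y \<in> scar R \<Longrightarrow> x \<otimes> y \<in> scar R"
  and one_closed: "\<one> \<in> scar R"
  using s_structure unfolding s_structure_def by blast+

lemma sub_closed: "x \<in> scar R \<Longrightarrow> y \<in> scar R \<Longrightarrow> x \<ominus> y \<in> scar R"
  unfolding ssub_def by (simp add: add_closed neg_closed)

lemma zero_add: "x \<in> scar R \<Longrightarrow> \<zero> \<oplus> x = x"
  by (metis add_comm add_zero zero_closed)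

lemma add_right_cancel:
  assumes "a \<in> scar R" "b \<in> scar R" "c \<in> scar R" and "a \<oplus> c = b \<oplus> c"
  shows "a = b"
proof -
  have "a = a \<oplus> c \<oplus> neg c" using assms(1,3) by (simp add: add_assoc add_neg add_zero neg_closed)
  also have "\<dots> = b" using assms by (simp add: add_assoc add_neg add_zero neg_closed)
  finally show ?thesis .
qed

lemma neg_unique: "a \<in> scar R \<Longrightarrow> b \<in> scar R \<Longrightarrow> a \<oplus> b = \<zero> \<Longrightarrow> b = neg a"
  by (rule add_right_cancel[where c = a]) (simp_all add: add_comm add_neg neg_closed)

lemma neg_zero: "neg \<zero> = \<zero>"
  by (rule neg_unique[symmetric]) (simp_all add: add_zero zero_closed)

lemma sub_self: "a \<in> scar R \<Longrightarrow> a \<ominus> a = \<zero>"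
  unfolding ssub_def by (rule add_neg)

lemma sub_zero: "a \<in> scar R \<Longrightarrow> a \<ominus> \<zero> = a"
  unfolding ssub_def by (simp add: neg_zero add_zero)

lemma add_sub_cancel: "a \<in> scar R \<Longrightarrow> b \<in> scar R \<Longrightarrow> a \<oplus> b \<ominus> b = a"
  unfolding ssub_def by (simp add: add_assoc add_neg add_zero neg_closed)

lemma sub_add_cancel: "a \<in> scar R \<Longrightarrow> b \<in> scar R \<Longrightarrow> a \<ominus> b \<oplus> b = a"
  unfolding ssub_def by (simp add: add_assoc add_comm[of "neg b" b] add_neg add_zero neg_closed)

lemma sub_eq_zero_imp_eq: "a \<in> scar R \<Longrightarrow> b \<in> scar R \<Longrightarrow> a \<ominus> b = \<zero> \<Longrightarrow> a = b"
  using sub_add_cancel[of a b] by (simp add: zero_add)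

lemma eq_sub_imp_zero: "a \<in> scar R \<Longrightarrow> b \<in> scar R \<Longrightarrow> a = a \<ominus> b \<Longrightarrow> b = \<zero>"
  using sub_add_cancel[of a b] add_right_cancel[of "\<zero>" b a]
  by (simp add: add_comm[of a] zero_add zero_closed)

lemma sub_add_sub_same:
  assumes "a \<in> scar R" "b \<in> scar R" "c \<in> scar R" "u \<in> scar R" and "c \<oplus> u = a \<oplus> b"
  shows "(a \<ominus> u) \<oplus> (b \<ominus> u) = c \<ominus> u"
proof (rule add_right_cancel[where c = u])
  have "(a \<ominus> u) \<oplus> (b \<ominus> u) \<oplus> u = a \<ominus> u \<oplus> b"
    using assms(1,2,4) by (simp add: add_assoc sub_add_cancel sub_closed)
  also have "\<dots> = a \<oplus> b \<ominus> u"
    using assms(1,2,4) unfolding ssub_def by (simp add: add_assoc add_comm[of "neg u" b] neg_closed)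
  also have "\<dots> = c \<oplus> u \<ominus> u" using assms(5) by simp
  also have "\<dots> = c \<ominus> u \<oplus> u" using assms(3,4) by (simp add: add_sub_cancel sub_add_cancel)
  finally show "(a \<ominus> u) \<oplus> (b \<ominus> u) \<oplus> u = c \<ominus> u \<oplus> u" .
qed (use assms in \<open>simp_all add: add_closed sub_closed\<close>)

end

locale essential_sstruct =
  fixes R :: "'a sstruct" (structure)
  assumes essential: "essential R"

sublocale essential_sstruct \<subseteq> sstructure
  using essential by unfold_locales (simp add: essential_def)

context essential_sstruct
begin

lemma mul_comm: "x \<in> scar R \<Longrightarrow> y \<in> scar R \<Longrightarrow> x \<otimes> y = y \<otimes> x"
  using essential unfolding essential_def s_commutative_def by blast

lemma wheel_distrib:
  "s \<in> scar R \<Longrightarrow> t \<in> scar R \<Longrightarrow> r \<in> scar R \<Longrightarrow> s \<otimes> (t \<oplus> r) \<oplus> s \<otimes> \<zero> = s \<otimes> t \<oplus> s \<otimes> r"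
  using essential unfolding essential_def wheel_distributive_def by blast

lemma s_assoc:
  "m \<in> S0 \<Longrightarrow> n \<in> S0 \<Longrightarrow> s \<in> scar R \<Longrightarrow>
   m \<otimes> (n \<otimes> s) = (m \<otimes> n) \<otimes> s \<ominus> ((m \<ominus> \<one>) \<otimes> (n \<ominus> \<one>)) \<otimes> (\<zero> \<otimes> s)"
  using essential unfolding essential_def s_associative_def by blast

lemma zero_in_S0: "\<zero> \<in> S0"
  and one_in_S0: "\<one> \<in> S0"
  and S0_eq_one_mul: "S0 = {\<one> \<otimes> x | x. x \<in> S0}"
  using essential unfolding essential_def by blast+

lemma mem_S0_iff: "x \<in> S0 \<longleftrightarrow> x \<in> scar R \<and> \<zero> \<otimes> x = \<zero> \<and> x \<otimes> \<zero> = \<zero>"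
  unfolding S_alpha_def by blast

lemma sq1_closed: "sq1 R \<in> scar R"
  and zero_mul_sq1: "\<zero> \<otimes> sq1 R = \<one>"
  using essential unfolding essential_def standard_bases_def is_base_def S_alpha_def by auto

lemma mul_add_right:
  assumes "s \<in> scar R" "s \<otimes> \<zero> = \<zero>" "t \<in> scar R" "r \<in> scar R"
  shows "s \<otimes> (t \<oplus> r) = s \<otimes> t \<oplus> s \<otimes> r"
  using wheel_distrib[OF assms(1,3,4)] assms by (simp add: add_zero add_closed mul_closed)

lemma mul_neg_right:
  assumes "s \<in> scar R" "s \<otimes> \<zero> = \<zero>" "t \<in> scar R"
  shows "s \<otimes> neg t = neg (s \<otimes> t)"
proof (rule neg_unique)
  show "s \<otimes> t \<oplus> s \<otimes> neg t = \<zero>"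
    using mul_add_right[OF assms(1,2,3) neg_closed[OF assms(3)]] assms by (simp add: add_neg)
qed (use assms in \<open>simp_all add: mul_closed neg_closed\<close>)

lemma mul_sub_right:
  "s \<in> scar R \<Longrightarrow> s \<otimes> \<zero> = \<zero> \<Longrightarrow> t \<in> scar R \<Longrightarrow> r \<in> scar R \<Longrightarrow> s \<otimes> (t \<ominus> r) = s \<otimes> t \<ominus> s \<otimes> r"
  unfolding ssub_def by (simp add: mul_add_right mul_neg_right neg_closed)

lemma add_in_S0:
  assumes "x \<in> S0" "y \<in> S0"
  shows "x \<oplus> y \<in> S0"
proof -
  have xy: "x \<oplus> y \<in> scar R" using assms by (simp add: mem_S0_iff add_closed)
  have "\<zero> \<otimes> (x \<oplus> y) = \<zero>"
    using mul_add_right[of \<zero> x y] zero_in_S0 assms by (simp add: mem_S0_iff add_zero)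
  then show ?thesis using xy mul_comm[OF xy zero_closed] by (simp add: mem_S0_iff)
qed

lemma unity_in_S0: "unity R e \<Longrightarrow> e \<in> S0"
  unfolding unity_def Lambda_def by (simp add: mem_S0_iff zero_closed)

lemma sone_mul_sone:
  assumes "unity R e"
  shows "\<one> \<otimes> \<one> = \<one>"
proof -
  have e: "e \<in> scar R" "e \<in> S0" "\<And>s. s \<in> scar R \<Longrightarrow> e \<otimes> s = s \<and> s \<otimes> e = s"
    using assms unity_in_S0 unfolding unity_def Lambda_def by auto
  define n where "n = e \<oplus> \<one>"
  have n: "n \<in> S0" "n \<in> scar R" "n \<ominus> \<one> = e"
    unfolding n_def using e one_in_S0 add_in_S0 by (auto simp: mem_S0_iff add_sub_cancel one_closed)
  have "e \<otimes> (n \<otimes> sq1 R) = (e \<otimes> n) \<otimes> sq1 R \<ominus> ((e \<ominus> \<one>) \<otimes> (n \<ominus> \<one>)) \<otimes> (\<zero> \<otimes> sq1 R)"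
    using s_assoc e(2) n(1) sq1_closed by blast
  then have "n \<otimes> sq1 R = n \<otimes> sq1 R \<ominus> (e \<ominus> \<one>) \<otimes> \<one>"
    using e n sq1_closed by (simp add: mul_closed zero_mul_sq1 sub_closed one_closed)
  then have "(e \<ominus> \<one>) \<otimes> \<one> = \<zero>"
    by (rule eq_sub_imp_zero[rotated 2]) (use e(1) n(2) in \<open>simp_all add: mul_closed sub_closed one_closed sq1_closed\<close>)
  then have "\<one> \<otimes> (e \<ominus> \<one>) = \<zero>"
    using mul_comm[of "e \<ominus> \<one>" \<one>] e(1) by (simp add: sub_closed one_closed)
  moreover have "\<one> \<otimes> (e \<ominus> \<one>) = \<one> \<ominus> \<one> \<otimes> \<one>"
    using mul_sub_right[of \<one> e \<one>] one_in_S0 e by (simp add: mem_S0_iff)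
  ultimately show ?thesis
    using sub_eq_zero_imp_eq by (metis one_closed mul_closed)
qed

lemma zero_mul_sq1_add_one: "\<zero> \<otimes> (sq1 R \<oplus> \<one>) = \<one>"
proof -
  have "\<zero> \<otimes> \<zero> = \<zero>" "\<zero> \<otimes> \<one> = \<zero>"
    using zero_in_S0 one_in_S0 by (simp_all add: mem_S0_iff)
  then show ?thesis
    using wheel_distrib[OF zero_closed sq1_closed one_closed]
    by (simp add: zero_mul_sq1 add_zero one_closed mul_closed add_closed sq1_closed zero_closed)
qed

lemma q0_eq_if_unity_sone: "unity R \<one> \<Longrightarrow> q0 R x = x \<otimes> (sq1 R \<oplus> \<one>) \<ominus> \<one>"
  unfolding q0_def unity_def by (simp add: add_sub_cancel add_closed sq1_closed one_closed)

lemma q0_add_if_unity_sone: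
  assumes "unity R \<one>" and "x \<in> scar R" "y \<in> scar R"
  shows "q0 R x \<oplus> q0 R y = q0 R (x \<oplus> y)"
proof -
  define Q where "Q = sq1 R \<oplus> \<one>"
  have Q: "Q \<in> scar R" "Q \<otimes> \<zero> = \<one>"
    unfolding Q_def using zero_mul_sq1_add_one mul_comm[of "sq1 R \<oplus> \<one>" \<zero>]
    by (simp_all add: add_closed sq1_closed one_closed zero_closed)
  have "(x \<oplus> y) \<otimes> Q \<oplus> \<one> = x \<otimes> Q \<oplus> y \<otimes> Q"
    using wheel_distrib[OF Q(1) assms(2,3)] Q assms(2,3)
    by (simp add: mul_comm[of _ Q] add_closed)
  then show ?thesis
    using assms by (simp add: q0_eq_if_unity_sone Q_def[symmetric] sub_add_sub_same
                              mul_closed add_closed Q(1) one_closed)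
qed

end

lemma s_field_unity_sone:
  assumes "s_field R"
  shows "unity R (sone R)"
proof -
  interpret essential_sstruct R
    using assms by unfold_locales (simp add: s_field_def s_ring_def)
  obtain e where e: "unity R e"
    and inverse: "\<forall>x\<in>S0. x \<noteq> \<zero> \<longrightarrow> (\<exists>y\<in>S0. x \<otimes> y = e \<and> y \<otimes> x = e)"
    using assms unfolding s_field_def by blast
  have e_closed: "e \<in> scar R" and e_S0: "e \<in> S0" and one_mul_e: "\<one> \<otimes> e = \<one>"
    using e unity_in_S0 one_closed unfolding unity_def Lambda_def by auto
  have "\<one> = e"
  proof (cases "\<one> = \<zero>")
    case True
    then obtain x where "x \<in> S0" "e = \<zero> \<otimes> x"
      using e_S0 S0_eq_one_mul by auto
    then show ?thesis using True by (simp add: mem_S0_iff)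
  next
    case False
    then obtain v where v: "v \<in> S0" "\<one> \<otimes> v = e"
      using inverse one_in_S0 by blast
    have "\<one> = \<one> \<otimes> (\<one> \<otimes> v)" using v one_mul_e by simp
    also have "\<dots> = (\<one> \<otimes> \<one>) \<otimes> v \<ominus> ((\<one> \<ominus> \<one>) \<otimes> (\<one> \<ominus> \<one>)) \<otimes> (\<zero> \<otimes> v)"
      using s_assoc one_in_S0 v(1) by (simp add: mem_S0_iff)
    also have "\<dots> = e"
      using v zero_in_S0 sone_mul_sone[OF e] e_closed
      by (simp add: mem_S0_iff sub_self sub_zero one_closed)
    finally show ?thesis .
  qed
  then show ?thesis using e by simp
qed

theorem proposition4p2p5:
  assumes "s_field R"
    and "\<alpha> \<in> S_alpha R (szero R)" and "\<beta> \<in> S_alpha R (szero R)"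
    and "\<alpha> \<noteq> szero R" and "\<beta> \<noteq> szero R" and "sadd R \<alpha> \<beta> \<noteq> szero R"
  shows "sadd R (div_zero R \<alpha>) (div_zero R \<beta>) = div_zero R (sadd R \<alpha> \<beta>)"
proof -
  interpret essential_sstruct R
    using assms(1) by unfold_locales (simp add: s_field_def s_ring_def)
  show ?thesis
    using q0_add_if_unity_sone[OF s_field_unity_sone[OF assms(1)]] assms(2,3)
    unfolding div_zero_def by (simp add: mem_S0_iff)
qed

end
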